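(* Let $\mu$ be a positive Radon measure on $\mathbb{R}^d$ (not assumed to satisfy any growth condition or doubling condition), let $1 \le q < p < \infty$, and let $k>1$ and $\beta>1$ be fixed with $\beta > k^{\frac{dpq}{p-q}}$. Then there is a constant $C>0$ such that for all $f \in \mathcal{M}^p_q(\mu)$, \[ C^{-1}\,\| f \, : \, \mathcal{M}^p_q(\mu)\|_d \le \| f \, : \, \mathcal{M}^p_q(\mu)\| \le C\,\| f \, : \, \mathcal{M}^p_q(\mu)\|_d . \]
   Context: A "cube" $Q\subset\mathbb{R}^d$ is a closed cube with sides parallel to the axes; $Q(x,l)$ is the cube centered at $x$ with side length $l$, and for $\rho>0$, $\rho Q$ is the cube concentric with $Q$ with side length $\rho$ times that of $Q$. $\mathcal{Q}(\mu)$ is the set of all cubes $Q$ with $\mu(Q)>0$; if $\mu$ is finite, $\mathbb{R}^d$ is also included in $\mathcal{Q}(\mu)$. For $1\le q\le p<\infty$ and $f\in L^1_{loc}(\mu)$, \[ \| f \, : \, \mathcal{M}^p_q(\mu)\| := \sup_{Q \in \mathcal{Q}(\mu)} \mu(2Q)^{\frac{1}{p}-\frac{1}{q}} \Big(\int_Q|f|^q\,d\mu\Big)^{\frac{1}{q}}, \] and $\mathcal{M}^p_q(\mu)$ is the space of $f$ for which this is finite. A cube $Q\in\mathcal{Q}(\mu)$ is called $(k,\beta)$-doubling if $\mu(kQ)\le \beta\,\mu(Q)$; $\mathcal{Q}(\mu;k,\beta)$ denotes the set of all $(k,\beta)$-doubling cubes in $\mathcal{Q}(\mu)$, and \[ \|f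 \, : \, \mathcal{M}^p_q(\mu)\|_d := \sup_{Q \in \mathcal{Q}(\mu;k,\beta)} \mu(Q)^{\frac{1}{p}-\frac{1}{q}} \Big(\int_Q |f(y)|^q\,d\mu(y)\Big)^{\frac{1}{q}}. \] *)

theory Defs
  imports "HOL-Analysis.Analysis"
begin

definition cube :: "'a::euclidean_space \<Rightarrow> real \<Rightarrow> 'a set" where
  "cube x l = cbox (x - (l/2) *\<^sub>R One) (x + (l/2) *\<^sub>R One)"

definition radon_measure :: "'a::euclidean_space measure \<Rightarrow> bool" where
  "radon_measure M \<longleftrightarrow> sets M = sets borel \<and> (\<forall>K. compact K \<longrightarrow> emeasure M K < \<infinity>)"

definition L1_loc :: "'a::euclidean_space measure \<Rightarrow> ('a \<Rightarrow> real) set" where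
  "L1_loc M = {f. f \<in> borel_measurable M \<and> (\<forall>K. compact K \<longrightarrow> set_integrable M K f)}"

definition enn_pow :: "real \<Rightarrow> ennreal \<Rightarrow> ereal" where
  "enn_pow r x = (if x = \<infinity> then \<infinity> else ereal (enn2real x powr r))"

definition morrey_term :: "'a measure \<Rightarrow> real \<Rightarrow> real \<Rightarrow> ('a \<Rightarrow> real) \<Rightarrow> 'a set \<Rightarrow> 'a set \<Rightarrow> ereal" where
  "morrey_term M p q f B Q =
     ereal (measure M B powr (1/p - 1/q)) *
     enn_pow (1/q) (\<integral>\<^sup>+ y. ennreal (\<bar>f y\<bar> powr q) * indicator Q y \<partial>M)"

definition pos_cubes :: "'a::euclidean_space measure \<Rightarrow> ('a \<times> real) set" where
  "pos_cubes M = {(x, l). l > 0 \<and> emeasure M (cube x l) > 0}"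

definition doubling_cubes :: "'a::euclidean_space measure \<Rightarrow> real \<Rightarrow> real \<Rightarrow> ('a \<times> real) set" where
  "doubling_cubes M k \<beta> = {(x, l). (x, l) \<in> pos_cubes M \<and>
      emeasure M (cube x (k * l)) \<le> ennreal \<beta> * emeasure M (cube x l)}"

text \<open>Morrey norm. The whole space R^d belongs to Q(\<mu>) iff \<mu> is finite; then 2R^d = R^d.\<close>
definition morrey_norm :: "'a::euclidean_space measure \<Rightarrow> real \<Rightarrow> real \<Rightarrow> ('a \<Rightarrow> real) \<Rightarrow> ereal" where
  "morrey_norm M p q f =
     sup (SUP (x, l) \<in> pos_cubes M. morrey_term M p q f (cube x (2 * l)) (cube x l))
         (if emeasure M UNIV < \<infinity> then morrey_term M p q f UNIV UNIV else 0)"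

text \<open>Morrey norm taken over (k,\<beta>)-doubling cubes (R^d is trivially doubling since kR^d = R^d).\<close>
definition morrey_norm_d :: "'a::euclidean_space measure \<Rightarrow> real \<Rightarrow> real \<Rightarrow> real \<Rightarrow> real \<Rightarrow> ('a \<Rightarrow> real) \<Rightarrow> ereal" where
  "morrey_norm_d M k \<beta> p q f =
     sup (SUP (x, l) \<in> doubling_cubes M k \<beta>. morrey_term M p q f (cube x l) (cube x l))
         (if emeasure M UNIV < \<infinity> then morrey_term M p q f UNIV UNIV else 0)"

definition morrey_space :: "'a::euclidean_space measure \<Rightarrow> real \<Rightarrow> real \<Rightarrow> ('a \<Rightarrow> real) set" where
  "morrey_space M p q = {f \<in> L1_loc M. morrey_norm M p q f < \<infinity>}"

end

theory Submission
  imports Defs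
begin

text \<open>Let \<open>\<nu>\<close> be the measure with density \<open>|f|\<^sup>q\<close>, so that a Morrey term is at most \<open>t\<close>
  iff \<open>\<nu>(Q) \<le> t\<^sup>q \<mu>(B)\<^sup>a\<close> with \<open>a = 1 - q/p\<close>. A \<open>(k,\<beta>)\<close>-doubling cube \<open>Q\<close> is covered by
  boundedly many cubes whose doubles lie in \<open>kQ\<close>, and \<open>\<mu>(kQ) \<le> \<beta> \<mu>(Q)\<close>; this bounds the norm
  over doubling cubes by the full norm. Conversely, for an arbitrary cube \<open>Q = Q(x,l)\<close> and
  \<open>y \<in> Q\<close>, shrink \<open>Q(y,l)\<close> by factors of \<open>k\<close> until it is doubling. If this first happens at
  step \<open>j\<close>, the non-doubling steps before force \<open>\<mu>(Q(y, l k\<^sup>-\<^sup>j)) \<le> \<beta>\<^sup>1\<^sup>-\<^sup>j \<mu>(2Q)\<close>, and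
  about \<open>k\<^sup>d\<^sup>j\<close> such cubes cover the points stopping at step \<open>j\<close>. Summing over \<open>j\<close> gives a
  geometric series of ratio \<open>k\<^sup>d / \<beta>\<^sup>a\<close>, which is \<open>< 1\<close> exactly by the hypothesis on \<open>\<beta>\<close>;
  the points that never stop form a \<open>\<mu>\<close>-null set by the same count, as \<open>k\<^sup>d < \<beta>\<close>.\<close>

lemma mem_cube: "z \<in> cube x l \<longleftrightarrow> (\<forall>b\<in>Basis. \<bar>z \<bullet> b - x \<bullet> b\<bar> \<le> l/2)"
proof -
  have "((x - (l/2) *\<^sub>R One) \<bullet> b \<le> z \<bullet> b \<and> z \<bullet> b \<le> (x + (l/2) *\<^sub>R One) \<bullet> b)
          \<longleftrightarrow> \<bar>z \<bullet> b - x \<bullet> b\<bar> \<le> l/2" if "b \<in> Basis" for b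
    using that by (cases "z \<bullet> b \<le> x \<bullet> b"; simp add: inner_diff_left inner_add_left abs_if; linarith)
  then show ?thesis unfolding cube_def mem_box by blast
qed

lemma cube_subset_cube:
  assumes "y \<in> cube x u" "u + s \<le> L"
  shows "cube y s \<subseteq> cube x L"
proof
  fix z assume "z \<in> cube y s"
  then have "\<forall>b\<in>Basis. \<bar>z \<bullet> b - y \<bullet> b\<bar> \<le> s/2" by (simp add: mem_cube)
  moreover have "\<forall>b\<in>Basis. \<bar>y \<bullet> b - x \<bullet> b\<bar> \<le> u/2" using assms(1) by (simp add: mem_cube)
  ultimately show "z \<in> cube x L" unfolding mem_cube using assms(2)
    by (smt (verit, best) field_sum_of_halves)
qed

lemma cube_mono: "s \<le> s' \<Longrightarrow> cube y s \<subseteq> cube y s'"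
  by (auto simp: mem_cube) (smt (verit))

lemma closed_cube: "closed (cube x l)"
  unfolding cube_def by (rule closed_cbox)

lemma compact_cube: "compact (cube x l)"
  unfolding cube_def by (rule compact_cbox)

lemma abs_diff_le_if_floor_divide_eq:
  fixes u v h :: real
  assumes "0 < h" "\<lfloor>u / h\<rfloor> = \<lfloor>v / h\<rfloor>"
  shows "\<bar>u - v\<bar> \<le> h"
proof -
  have "\<bar>u/h - v/h\<bar> \<le> 1"
    using assms(2) floor_correct[of "u/h"] floor_correct[of "v/h"] by linarith
  then have "\<bar>u - v\<bar> / h \<le> 1"
    using assms(1) by (simp add: diff_divide_distrib[symmetric])
  then show ?thesis using assms(1) by (simp add: divide_le_eq)
qed

lemma floor_divide_mem_range:
  fixes u l h :: real
  assumes "0 < h" "0 \<le> u" "u \<le> l"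
  shows "\<lfloor>u / h\<rfloor> \<in> {0..\<lceil>l / h\<rceil>}"
proof -
  have "0 \<le> u / h" "u / h \<le> l / h" using assms by (simp_all add: divide_right_mono)
  moreover have "\<lfloor>u / h\<rfloor> \<le> \<lceil>l / h\<rceil>"
    using floor_mono[OF calculation(2)] floor_le_ceiling[of "l/h"] by linarith
  ultimately show ?thesis by simp
qed

lemma finite_cover_from_index:
  assumes "g ` S \<subseteq> P" "finite P"
    and close: "\<And>y z. y \<in> S \<Longrightarrow> z \<in> S \<Longrightarrow> g y = g z \<Longrightarrow> z \<in> C y"
  shows "\<exists>F. finite F \<and> F \<subseteq> S \<and> card F \<le> card P \<and> S \<subseteq> (\<Union>y\<in>F. C y)"
proof -
  define pick where "pick i = (SOME z. z \<in> S \<and> g z = i)" for i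
  define F where "F = pick ` g ` S"
  have pick: "pick (g z) \<in> S \<and> g (pick (g z)) = g z" if "z \<in> S" for z
    unfolding pick_def by (rule someI[of _ z]) (use that in auto)
  have fin: "finite (g ` S)" using assms(1,2) by (rule finite_subset)
  have "finite F" unfolding F_def using fin by simp
  moreover have "F \<subseteq> S" unfolding F_def using pick by auto
  moreover have "card F \<le> card P"
    unfolding F_def using card_image_le[OF fin, of pick] card_mono[OF assms(2,1)] by linarith
  moreover have "S \<subseteq> (\<Union>y\<in>F. C y)"
  proof
    fix z assume z: "z \<in> S"
    then have "z \<in> C (pick (g z))" using pick[OF z] by (intro close) auto
    then show "z \<in> (\<Union>y\<in>F. C y)" unfolding F_def using z by blast
  qed
  ultimately show ?thesis by blast
qed

text \<open>Points of \<open>S\<close> are indexed by the grid cell of mesh \<open>r/2\<close> containing them; two points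
  in the same cell are within \<open>r/2\<close> of each other in every coordinate.\<close>
lemma finite_cover_by_cubes:
  fixes x :: "'a::euclidean_space"
  assumes r: "0 < r" and l: "0 \<le> l" and S: "S \<subseteq> cube x l"
  shows "\<exists>F. finite F \<and> F \<subseteq> S \<and> real (card F) \<le> (2*l/r + 2) ^ DIM('a)
             \<and> S \<subseteq> (\<Union>y\<in>F. cube y r)"
proof -
  define h where "h = r/2"
  define n where "n = \<lceil>l/h\<rceil>"
  define g where "g z = restrict (\<lambda>b. \<lfloor>(z \<bullet> b - x \<bullet> b + l/2)/h\<rfloor>) Basis" for z :: 'a
  define P where "P = PiE (Basis::'a set) (\<lambda>_. {0..n})"
  have h: "0 < h" unfolding h_def using r by simp
  have "g ` S \<subseteq> P"
  proof -
    have "\<lfloor>(z \<bullet> b - x \<bullet> b + l/2)/h\<rfloor> \<in> {0..n}" if "z \<in> S" "b \<in> Basis" for z b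
    proof -
      have "\<bar>z \<bullet> b - x \<bullet> b\<bar> \<le> l/2" using that S by (auto simp: mem_cube)
      then show ?thesis unfolding n_def by (intro floor_divide_mem_range[OF h]) linarith+
    qed
    then show ?thesis unfolding P_def g_def by (auto simp: restrict_PiE_iff)
  qed
  moreover have "finite P" unfolding P_def by (simp add: finite_PiE)
  moreover have "z \<in> cube y r" if "y \<in> S" "z \<in> S" "g y = g z" for y z
  proof -
    have "\<lfloor>(y \<bullet> b - x \<bullet> b + l/2)/h\<rfloor> = \<lfloor>(z \<bullet> b - x \<bullet> b + l/2)/h\<rfloor>" if "b \<in> Basis" for b
      using fun_cong[OF \<open>g y = g z\<close>, of b] that unfolding g_def by simp
    from abs_diff_le_if_floor_divide_eq[OF h this] show ?thesis
      unfolding mem_cube h_def by (simp add: abs_minus_commute)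
  qed
  ultimately obtain F where F: "finite F" "F \<subseteq> S" "card F \<le> card P" "S \<subseteq> (\<Union>y\<in>F. cube y r)"
    using finite_cover_from_index[of g S P "\<lambda>y. cube y r"] by blast
  have "l/h = 2*l/r" "0 \<le> 2*l/r" unfolding h_def using l r by simp_all
  then have n: "0 \<le> n" "real_of_int n \<le> 2*l/r + 1"
    using ceiling_correct[of "l/h"] unfolding n_def by simp_all
  have "real (card P) = (real_of_int n + 1) ^ DIM('a)"
    using n(1) unfolding P_def by (simp add: card_PiE)
  also have "\<dots> \<le> (2*l/r + 2) ^ DIM('a)"
    using n by (intro power_mono) simp_all
  finally have "real (card F) \<le> (2*l/r + 2) ^ DIM('a)"
    using F(3) by (meson of_nat_le_iff order_trans)
  with F show ?thesis by blast
qed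

lemma finite_covers_by_cubes_scaled:
  fixes x :: "'a::euclidean_space"
  assumes k: "1 \<le> k" and l: "0 < l" and S: "\<And>j. S j \<subseteq> cube x l"
  obtains F where "\<And>j. finite (F j)" "\<And>j. F j \<subseteq> S j"
    "\<And>j. real (card (F j)) \<le> 4 ^ DIM('a) * (k ^ DIM('a)) ^ j"
    "\<And>j. S j \<subseteq> (\<Union>y\<in>F j. cube y (l / k^j))"
proof -
  have "\<exists>F. finite F \<and> F \<subseteq> S j \<and> real (card F) \<le> 4 ^ DIM('a) * (k ^ DIM('a)) ^ j
          \<and> S j \<subseteq> (\<Union>y\<in>F. cube y (l / k^j))" for j
  proof -
    have kj: "1 \<le> k^j" using k by (rule one_le_power)
    then obtain F where F: "finite F" "F \<subseteq> S j"
        "real (card F) \<le> (2 * l / (l / k^j) + 2) ^ DIM('a)" "S j \<subseteq> (\<Union>y\<in>F. cube y (l / k^j))"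
      using finite_cover_by_cubes[OF _ less_imp_le[OF l] S[of j], of "l / k^j"] l by auto
    have "(2 * l / (l / k^j) + 2) ^ DIM('a) \<le> (4 * k^j) ^ DIM('a)"
      using l kj by (intro power_mono) auto
    also have "\<dots> = 4 ^ DIM('a) * (k ^ DIM('a)) ^ j"
      by (simp add: power_mult_distrib power_mult[symmetric] mult.commute)
    finally show ?thesis using F by (meson order_trans)
  qed
  then show thesis using that unfolding choice_iff' by metis
qed

lemma emeasure_UN_le_card_mult:
  assumes "finite F" "\<And>y. y \<in> F \<Longrightarrow> A y \<in> sets N"
    and "\<And>y. y \<in> F \<Longrightarrow> emeasure N (A y) \<le> ennreal c"
    and "0 \<le> c" "real (card F) \<le> n"
  shows "emeasure N (\<Union>y\<in>F. A y) \<le> ennreal (n * c)"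
proof -
  have "emeasure N (\<Union>y\<in>F. A y) \<le> (\<Sum>y\<in>F. emeasure N (A y))"
    using assms(1,2) by (intro emeasure_subadditive_finite) auto
  also have "\<dots> \<le> (\<Sum>y\<in>F. ennreal c)"
    using assms(3) by (rule sum_mono)
  also have "\<dots> = ennreal (real (card F) * c)"
    using assms(4) by (simp add: ennreal_mult ennreal_of_nat_eq_real_of_nat)
  also have "\<dots> \<le> ennreal (n * c)"
    using assms(4,5) by (intro ennreal_leI mult_right_mono)
  finally show ?thesis .
qed

lemma subset_Union_first_index:
  fixes P :: "'a \<Rightarrow> nat \<Rightarrow> bool"
  shows "A \<subseteq> (\<Union>j. {y \<in> A. P y j \<and> (\<forall>i<j. \<not> P y i)}) \<union> {y \<in> A. \<forall>j. \<not> P y j}"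
proof
  fix y assume y: "y \<in> A"
  show "y \<in> (\<Union>j. {y \<in> A. P y j \<and> (\<forall>i<j. \<not> P y i)}) \<union> {y \<in> A. \<forall>j. \<not> P y j}"
  proof (cases "\<exists>j. P y j")
    case True
    define j where "j = (LEAST j. P y j)"
    have "P y j" unfolding j_def by (rule LeastI_ex[OF True])
    moreover have "\<forall>i<j. \<not> P y i" unfolding j_def using not_less_Least by blast
    ultimately show ?thesis using y by blast
  qed (use y in blast)
qed

lemma emeasure_eq_0_if_le_geometric:
  assumes "\<And>j::nat. emeasure N A \<le> ennreal (c * \<sigma>^j)" "0 \<le> \<sigma>" "\<sigma> < 1"
  shows "emeasure N A = 0"
proof -
  have "(\<lambda>j. ennreal (c * \<sigma>^j)) \<longlonglongrightarrow> ennreal (c * 0)"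
    using assms(2,3) by (intro tendsto_ennrealI tendsto_mult tendsto_const LIMSEQ_power_zero) auto
  then have "emeasure N A \<le> ennreal (c * 0)"
    by (rule LIMSEQ_le_const) (use assms(1) in auto)
  then show ?thesis by simp
qed

lemma emeasure_le_geometric_cover:
  assumes U: "\<And>j. U j \<in> sets N" and W: "W \<in> null_sets N" and A: "A \<subseteq> (\<Union>j. U j) \<union> W"
    and bound: "\<And>j. emeasure N (U j) \<le> ennreal (c * \<rho>^j)" and "0 \<le> c" "0 \<le> \<rho>" "\<rho> < 1"
  shows "emeasure N A \<le> ennreal (c / (1 - \<rho>))"
proof -
  have "emeasure N A \<le> emeasure N ((\<Union>j. U j) \<union> W)"
    using A U W by (intro emeasure_mono) auto
  also have "\<dots> \<le> emeasure N (\<Union>j. U j) + emeasure N W"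
    using U W by (intro emeasure_subadditive) auto
  also have "emeasure N W = 0" using W by auto
  also have "emeasure N (\<Union>j. U j) \<le> (\<Sum>j. emeasure N (U j))"
    using U by (intro emeasure_subadditive_countably) auto
  also have "\<dots> \<le> (\<Sum>j. ennreal (c * \<rho>^j))"
    using bound by (intro suminf_le summableI)
  also have "\<dots> = ennreal (c * (1 / (1 - \<rho>)))"
    using assms(5-7) by (intro suminf_ennreal_eq sums_mult geometric_sums) auto
  finally show ?thesis by simp
qed

locale radon =
  fixes M :: "'a::euclidean_space measure"
  assumes radon: "radon_measure M"
begin

lemma closed_sets: "closed A \<Longrightarrow> A \<in> sets M"
  using radon borel_closed unfolding radon_measure_def by auto

lemma cube_sets: "cube x l \<in> sets M"
  by (rule closed_sets[OF closed_cube])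

lemma emeasure_cube_finite: "emeasure M (cube x l) < \<infinity>"
  using radon compact_cube unfolding radon_measure_def by auto

lemma emeasure_cube: "emeasure M (cube x l) = ennreal (measure M (cube x l))"
  using emeasure_cube_finite[of x l] by (intro emeasure_eq_ennreal_measure) auto

lemma measure_cube_mono: "cube y s \<subseteq> cube x l \<Longrightarrow> measure M (cube y s) \<le> measure M (cube x l)"
  using emeasure_cube_finite cube_sets by (intro measure_mono_fmeasurable) (auto simp: fmeasurable_def)

lemma measure_pos_cube_pos:
  assumes "(x, l) \<in> pos_cubes M" "l \<le> l'"
  shows "0 < measure M (cube x l')"
proof -
  have "0 < measure M (cube x l)"
    using assms(1) unfolding pos_cubes_def emeasure_cube by simp
  also have "\<dots> \<le> measure M (cube x l')"
    using assms(2) by (intro measure_cube_mono cube_mono)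
  finally show ?thesis .
qed

lemma measure_nondoubling_cube:
  assumes \<beta>: "1 < \<beta>" and r: "0 < r" and nd: "(y, r) \<notin> doubling_cubes M k \<beta>"
  shows "\<beta> * measure M (cube y r) \<le> measure M (cube y (k * r))"
proof (cases "emeasure M (cube y r) = 0")
  case True
  then show ?thesis by (simp add: measure_def)
next
  case False
  with nd r have "\<not> emeasure M (cube y (k * r)) \<le> ennreal \<beta> * emeasure M (cube y r)"
    unfolding doubling_cubes_def pos_cubes_def by (auto simp: zero_less_iff_neq_zero)
  then show ?thesis
    unfolding emeasure_cube using \<beta> by (simp add: ennreal_mult'[symmetric] not_le ennreal_less_iff)
qed

lemma measure_nondoubling_chain:
  assumes k: "1 < k" and \<beta>: "1 < \<beta>" and l: "0 < l"
    and nd: "\<forall>i<j. (y, l / k^Suc i) \<notin> doubling_cubes M k \<beta>"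
  shows "measure M (cube y (l / k^j)) * \<beta>^j \<le> measure M (cube y l)"
  using nd
proof (induction j)
  case 0
  then show ?case by simp
next
  case (Suc j)
  have "\<beta> * measure M (cube y (l / k^Suc j)) \<le> measure M (cube y (k * (l / k^Suc j)))"
    using Suc.prems k l by (intro measure_nondoubling_cube[OF \<beta>]) auto
  also have "k * (l / k^Suc j) = l / k^j" using k by simp
  finally have "measure M (cube y (l / k^Suc j)) * \<beta>^Suc j \<le> measure M (cube y (l / k^j)) * \<beta>^j"
    using \<beta> by (simp add: mult_right_mono algebra_simps)
  with Suc show ?case by simp
qed

lemma measure_before_first_doubling:
  assumes k: "1 < k" and \<beta>: "1 < \<beta>" and l: "0 < l" and y: "y \<in> cube x l"
    and nd: "\<forall>i<j. (y, l / k^i) \<notin> doubling_cubes M k \<beta>"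
  shows "measure M (cube y (l / k^j)) * \<beta>^j \<le> \<beta> * measure M (cube x (2*l))"
proof -
  have "measure M (cube y (l / k^j)) * \<beta>^j \<le> \<beta> * measure M (cube y l)"
  proof (cases j)
    case 0
    then show ?thesis using \<beta> mult_right_mono[of 1 \<beta> "measure M (cube y l)"] by simp
  next
    case (Suc j')
    have "measure M (cube y (l / k^j)) \<le> measure M (cube y (l / k^j'))"
      using Suc k l by (intro measure_cube_mono cube_mono) (simp add: frac_le)
    then have "measure M (cube y (l / k^j)) * \<beta>^j \<le> \<beta> * (measure M (cube y (l / k^j')) * \<beta>^j')"
      using Suc \<beta> by (simp add: mult_right_mono algebra_simps)
    also have "\<dots> \<le> \<beta> * measure M (cube y l)"
      using nd Suc \<beta> by (intro mult_left_mono measure_nondoubling_chain[OF k \<beta> l]) auto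
    finally show ?thesis .
  qed
  also have "\<dots> \<le> \<beta> * measure M (cube x (2*l))"
    using y \<beta> by (intro mult_left_mono measure_cube_mono cube_subset_cube[of y x l]) auto
  finally show ?thesis .
qed

lemma nondoubling_points_null:
  assumes k: "1 < k" and \<beta>: "1 < \<beta>" and k\<beta>: "k ^ DIM('a) < \<beta>" and l: "0 < l"
  obtains W where "W \<in> null_sets M"
    "{y \<in> cube x l. \<forall>j. (y, l / k^j) \<notin> doubling_cubes M k \<beta>} \<subseteq> W"
proof -
  define d where "d = DIM('a)"
  define g where "g = measure M (cube x (2*l))"
  define \<sigma> where "\<sigma> = k^d / \<beta>"
  define T where "T j = {y \<in> cube x l. \<forall>i<j. (y, l / k^i) \<notin> doubling_cubes M k \<beta>}" for j
  obtain F where F: "\<And>j. finite (F j)" "\<And>j. F j \<subseteq> T j"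
      "\<And>j. real (card (F j)) \<le> 4^d * (k^d)^j" "\<And>j. T j \<subseteq> (\<Union>y\<in>F j. cube y (l / k^j))"
    using finite_covers_by_cubes_scaled[OF less_imp_le[OF k] l, of T x] unfolding d_def T_def by auto
  define V where "V j = (\<Union>y\<in>F j. cube y (l / k^j))" for j
  define W where "W = (\<Inter>j. V j)"
  have V_sets: "V j \<in> sets M" for j
    unfolding V_def using F(1) by (intro closed_sets closed_UN) (auto intro: closed_cube)
  have "emeasure M W \<le> ennreal (4^d * \<beta> * g * \<sigma>^j)" for j
  proof -
    have "emeasure M (cube y (l / k^j)) \<le> ennreal (\<beta> * g / \<beta>^j)" if "y \<in> F j" for y
    proof -
      have "y \<in> cube x l" "\<forall>i<j. (y, l / k^i) \<notin> doubling_cubes M k \<beta>"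
        using F(2)[of j] that unfolding T_def by auto
      from measure_before_first_doubling[OF k \<beta> l this]
      have "measure M (cube y (l / k^j)) \<le> \<beta> * g / \<beta>^j"
        unfolding g_def using \<beta> by (simp add: pos_le_divide_eq)
      then show ?thesis unfolding emeasure_cube by (rule ennreal_leI)
    qed
    then have "emeasure M (V j) \<le> ennreal (4^d * (k^d)^j * (\<beta> * g / \<beta>^j))"
      unfolding V_def using F(1,3) \<beta> unfolding g_def
      by (intro emeasure_UN_le_card_mult cube_sets) auto
    also have "4^d * (k^d)^j * (\<beta> * g / \<beta>^j) = 4^d * \<beta> * g * \<sigma>^j"
      unfolding \<sigma>_def by (simp add: power_divide)
    finally have "emeasure M (V j) \<le> ennreal (4^d * \<beta> * g * \<sigma>^j)" .
    moreover have "emeasure M W \<le> emeasure M (V j)"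
      using V_sets unfolding W_def by (intro emeasure_mono) auto
    ultimately show ?thesis by (rule order_trans[rotated])
  qed
  moreover have "0 \<le> \<sigma>" "\<sigma> < 1" unfolding \<sigma>_def d_def using k\<beta> \<beta> k by (simp_all add: divide_less_eq)
  ultimately have "emeasure M W = 0" by (rule emeasure_eq_0_if_le_geometric)
  moreover have "W \<in> sets M" unfolding W_def using V_sets by auto
  ultimately have "W \<in> null_sets M" by auto
  moreover have "{y \<in> cube x l. \<forall>j. (y, l / k^j) \<notin> doubling_cubes M k \<beta>} \<subseteq> W"
    using F(4) unfolding W_def V_def T_def by blast
  ultimately show thesis by (rule that)
qed

text \<open>Cubes of side \<open>(k - 1) l / 2\<close> centred in \<open>Q(x, l)\<close> have their doubles inside \<open>Q(x, k l)\<close>.\<close>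
lemma doubling_cube_growth:
  fixes \<nu> :: "'a measure"
  assumes sets_\<nu>: "sets \<nu> = sets M" and ac: "absolutely_continuous M \<nu>"
    and k: "1 < k" and \<beta>: "1 < \<beta>" and a: "0 < a" and T: "0 \<le> T"
    and growth: "\<And>y s. (y, s) \<in> pos_cubes M \<Longrightarrow>
                   emeasure \<nu> (cube y s) \<le> ennreal (T * measure M (cube y (2 * s)) powr a)"
    and dbl: "(x, l) \<in> doubling_cubes M k \<beta>"
  shows "emeasure \<nu> (cube x l) \<le>
           ennreal ((4 / (k - 1) + 2) ^ DIM('a) * \<beta> powr a * T * measure M (cube x l) powr a)"
proof -
  define m where "m = measure M (cube x l)"
  define s where "s = (k - 1) * l / 2"
  have l: "0 < l" using dbl unfolding doubling_cubes_def pos_cubes_def by auto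
  have s: "0 < s" "l + 2 * s = k * l" unfolding s_def using k l by (simp_all add: field_simps)
  have mk: "measure M (cube x (k * l)) \<le> \<beta> * m"
    using dbl \<beta> unfolding doubling_cubes_def emeasure_cube m_def
    by (simp add: ennreal_mult'[symmetric] ennreal_le_iff)
  obtain F where F: "finite F" "F \<subseteq> cube x l"
      "real (card F) \<le> (2 * l / s + 2) ^ DIM('a)" "cube x l \<subseteq> (\<Union>y\<in>F. cube y s)"
    using finite_cover_by_cubes[OF s(1) less_imp_le[OF l] order_refl[of "cube x l"]] by blast
  have "emeasure \<nu> (cube y s) \<le> ennreal (T * (\<beta> * m) powr a)" if "y \<in> F" for y
  proof (cases "emeasure M (cube y s) = 0")
    case True
    then have "cube y s \<in> null_sets \<nu>"
      using ac cube_sets[of y s] unfolding absolutely_continuous_def by auto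
    then show ?thesis by (simp add: null_setsD1)
  next
    case False
    then have "(y, s) \<in> pos_cubes M" using s unfolding pos_cubes_def by (simp add: zero_less_iff_neq_zero)
    then have "emeasure \<nu> (cube y s) \<le> ennreal (T * measure M (cube y (2 * s)) powr a)"
      by (rule growth)
    moreover have "cube y (2 * s) \<subseteq> cube x (k * l)"
      using F(2) that s(2) by (intro cube_subset_cube[of y x l]) auto
    then have "measure M (cube y (2 * s)) powr a \<le> (\<beta> * m) powr a"
      using mk a by (intro powr_mono2) (auto dest: measure_cube_mono)
    ultimately show ?thesis using T by (meson ennreal_leI mult_left_mono order_trans)
  qed
  then have "emeasure \<nu> (\<Union>y\<in>F. cube y s) \<le> ennreal ((2 * l / s + 2) ^ DIM('a) * (T * (\<beta> * m) powr a))"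
    using F(1,3) T sets_\<nu> cube_sets by (intro emeasure_UN_le_card_mult) auto
  moreover have "emeasure \<nu> (cube x l) \<le> emeasure \<nu> (\<Union>y\<in>F. cube y s)"
    using F(1,4) sets_\<nu> cube_sets by (intro emeasure_mono) auto
  moreover have "2 * l / s = 4 / (k - 1)" unfolding s_def using k l by (simp add: field_simps)
  ultimately show ?thesis
    unfolding m_def by (simp add: powr_mult mult.assoc mult.left_commute)
qed

lemma emeasure_first_doubling_cube:
  fixes \<nu> :: "'a measure"
  assumes k: "1 < k" and \<beta>: "1 < \<beta>" and a: "0 < a" and K: "0 \<le> K" and l: "0 < l"
    and growth: "\<And>y s. (y, s) \<in> doubling_cubes M k \<beta> \<Longrightarrow>
                   emeasure \<nu> (cube y s) \<le> ennreal (K * measure M (cube y s) powr a)"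
    and y: "y \<in> cube x l" and dbl: "(y, l / k^j) \<in> doubling_cubes M k \<beta>"
    and nd: "\<forall>i<j. (y, l / k^i) \<notin> doubling_cubes M k \<beta>"
  shows "emeasure \<nu> (cube y (l / k^j)) \<le>
           ennreal (K * (\<beta> powr a * measure M (cube x (2 * l)) powr a / (\<beta> powr a)^j))"
proof -
  have "measure M (cube y (l / k^j)) \<le> \<beta> * measure M (cube x (2 * l)) / \<beta>^j"
    using measure_before_first_doubling[OF k \<beta> l y nd] \<beta> by (simp add: pos_le_divide_eq)
  then have "measure M (cube y (l / k^j)) powr a \<le> (\<beta> * measure M (cube x (2 * l)) / \<beta>^j) powr a"
    using a by (intro powr_mono2) auto
  also have "\<dots> = \<beta> powr a * measure M (cube x (2 * l)) powr a / (\<beta> powr a)^j"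
    using \<beta> by (simp add: powr_divide powr_mult powr_realpow[symmetric] powr_powr mult.commute)
  finally show ?thesis
    using growth[OF dbl] K by (meson ennreal_leI mult_left_mono order_trans)
qed

lemma cube_growth_from_doubling_cubes:
  fixes \<nu> :: "'a measure"
  assumes sets_\<nu>: "sets \<nu> = sets M" and ac: "absolutely_continuous M \<nu>"
    and k: "1 < k" and \<beta>: "1 < \<beta>" and a: "0 < a" "a \<le> 1"
    and k\<beta>: "k ^ DIM('a) < \<beta> powr a" and K: "0 \<le> K"
    and growth: "\<And>y s. (y, s) \<in> doubling_cubes M k \<beta> \<Longrightarrow>
                   emeasure \<nu> (cube y s) \<le> ennreal (K * measure M (cube y s) powr a)"
    and l: "0 < l"
  shows "emeasure \<nu> (cube x l) \<le> ennreal (4 ^ DIM('a) * \<beta> powr a / (1 - k ^ DIM('a) / \<beta> powr a)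
            * K * measure M (cube x (2 * l)) powr a)"
proof -
  define d where "d = DIM('a)"
  define B where "B = \<beta> powr a"
  define c where "c = 4^d * B * K * measure M (cube x (2 * l)) powr a"
  define \<rho> where "\<rho> = k^d / B"
  define S where "S j = {y \<in> cube x l. (y, l / k^j) \<in> doubling_cubes M k \<beta>
                          \<and> (\<forall>i<j. (y, l / k^i) \<notin> doubling_cubes M k \<beta>)}" for j
  have B: "0 < B" "B \<le> \<beta>" unfolding B_def using \<beta> a powr_mono[of a 1 \<beta>] by auto
  have \<rho>: "0 \<le> \<rho>" "\<rho> < 1" unfolding \<rho>_def d_def B_def using k k\<beta> by (auto simp: divide_less_eq)
  have c: "0 \<le> c" unfolding c_def using B K by simp
  have "k ^ DIM('a) < \<beta>" using k\<beta> B unfolding B_def by linarith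
  then obtain W where W: "W \<in> null_sets M"
      "{y \<in> cube x l. \<forall>j. (y, l / k^j) \<notin> doubling_cubes M k \<beta>} \<subseteq> W"
    by (rule nondoubling_points_null[OF k \<beta> _ l])
  obtain F where F: "\<And>j. finite (F j)" "\<And>j. F j \<subseteq> S j"
      "\<And>j. real (card (F j)) \<le> 4^d * (k^d)^j" "\<And>j. S j \<subseteq> (\<Union>y\<in>F j. cube y (l / k^j))"
    using finite_covers_by_cubes_scaled[OF less_imp_le[OF k] l, of S x] unfolding d_def S_def by auto
  define U where "U j = (\<Union>y\<in>F j. cube y (l / k^j))" for j
  have U_sets: "U j \<in> sets M" for j
    unfolding U_def using F(1) by (intro closed_sets closed_UN) (auto intro: closed_cube)
  have "emeasure \<nu> (U j) \<le> ennreal (4^d * (k^d)^j * (K * (B * measure M (cube x (2 * l)) powr a / B^j)))" for j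
    unfolding U_def B_def using F(1,3) K sets_\<nu> cube_sets
      emeasure_first_doubling_cube[OF k \<beta> a(1) K l growth] F(2)[of j]
    by (intro emeasure_UN_le_card_mult) (auto simp: S_def)
  also have "4^d * (k^d)^j * (K * (B * measure M (cube x (2 * l)) powr a / B^j)) = c * \<rho>^j" for j
    unfolding c_def \<rho>_def by (simp add: power_divide)
  finally have \<nu>U: "emeasure \<nu> (U j) \<le> ennreal (c * \<rho>^j)" for j .
  have "cube x l \<subseteq> (\<Union>j. S j) \<union> {y \<in> cube x l. \<forall>j. (y, l / k^j) \<notin> doubling_cubes M k \<beta>}"
    unfolding S_def by (rule subset_Union_first_index)
  also have "\<dots> \<subseteq> (\<Union>j. U j) \<union> W"
    unfolding U_def using F(4) W(2) by (intro Un_mono UN_mono) auto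
  finally have "cube x l \<subseteq> (\<Union>j. U j) \<union> W" .
  moreover have "W \<in> null_sets \<nu>" using ac W(1) unfolding absolutely_continuous_def by auto
  ultimately have "emeasure \<nu> (cube x l) \<le> ennreal (c / (1 - \<rho>))"
    using U_sets sets_\<nu> \<nu>U c \<rho> by (intro emeasure_le_geometric_cover) auto
  also have "c / (1 - \<rho>) = 4 ^ DIM('a) * \<beta> powr a / (1 - k ^ DIM('a) / \<beta> powr a)
                            * K * measure M (cube x (2 * l)) powr a"
    unfolding c_def \<rho>_def B_def d_def by simp
  finally show ?thesis .
qed

end

lemma powr_inverse_le_iff:
  fixes x y q :: real
  assumes "0 \<le> x" "0 \<le> y" "0 < q"
  shows "x powr (1/q) \<le> y \<longleftrightarrow> x \<le> y powr q"
proof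
  assume "x powr (1/q) \<le> y"
  then have "(x powr (1/q)) powr q \<le> y powr q" using assms by (intro powr_mono2) auto
  then show "x \<le> y powr q" using assms by (simp add: powr_powr)
next
  assume "x \<le> y powr q"
  then have "x powr (1/q) \<le> (y powr q) powr (1/q)" using assms by (intro powr_mono2) auto
  then show "x powr (1/q) \<le> y" using assms by (simp add: powr_powr)
qed

lemma mult_powr_le_powr_if_root_le:
  fixes X C t q :: real
  assumes "0 \<le> X" "0 \<le> t" "0 < q" "X powr (1/q) \<le> C"
  shows "X * t powr q \<le> (C * t) powr q"
proof -
  have "0 \<le> C" using assms(4) by (meson order_trans powr_ge_zero)
  then have "X \<le> C powr q" using assms powr_inverse_le_iff by blast
  then show ?thesis using assms \<open>0 \<le> C\<close> by (simp add: powr_mult mult_right_mono)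
qed

lemma morrey_term_le_iff:
  assumes q: "0 < q" "q < p" and B: "0 < measure M B" and t: "0 \<le> t"
    and f: "f \<in> borel_measurable M" and Q: "Q \<in> sets M"
  shows "morrey_term M p q f B Q \<le> ereal t \<longleftrightarrow>
         emeasure (density M (\<lambda>y. ennreal (\<bar>f y\<bar> powr q))) Q \<le> ennreal (t powr q * measure M B powr (1 - q/p))"
proof -
  define m where "m = measure M B"
  define I where "I = emeasure (density M (\<lambda>y. ennreal (\<bar>f y\<bar> powr q))) Q"
  have "I = (\<integral>\<^sup>+ y. ennreal (\<bar>f y\<bar> powr q) * indicator Q y \<partial>M)"
    unfolding I_def using f Q by (simp add: emeasure_density)
  then have term_eq: "morrey_term M p q f B Q = ereal (m powr (1/p - 1/q)) * enn_pow (1/q) I"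
    unfolding morrey_term_def m_def by simp
  have m: "0 < m" "0 < m powr (1/p - 1/q)" using B unfolding m_def by auto
  show ?thesis
  proof (cases "I = \<infinity>")
    case True
    then show ?thesis unfolding term_eq enn_pow_def I_def[symmetric] using m by (simp add: top_unique)
  next
    case False
    then obtain i where i: "I = ennreal i" "0 \<le> i" by (cases I) auto
    have "morrey_term M p q f B Q \<le> ereal t \<longleftrightarrow> m powr (1/p - 1/q) * i powr (1/q) \<le> t"
      using i unfolding term_eq enn_pow_def by simp
    also have "\<dots> \<longleftrightarrow> i powr (1/q) \<le> t * m powr (1/q - 1/p)"
    proof -
      have "m powr (1/p - 1/q) * i powr (1/q) = i powr (1/q) / m powr (1/q - 1/p)"
        using powr_minus[of m "1/q - 1/p"] by (simp add: divide_inverse)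
      then show ?thesis using m by (simp add: pos_divide_le_eq)
    qed
    also have "\<dots> \<longleftrightarrow> i \<le> (t * m powr (1/q - 1/p)) powr q"
      using i t q by (intro powr_inverse_le_iff) auto
    also have "(t * m powr (1/q - 1/p)) powr q = t powr q * m powr (1 - q/p)"
    proof -
      have "(1/q - 1/p) * q = 1 - q/p" using q by (simp add: field_simps)
      then show ?thesis using t m by (simp add: powr_mult powr_powr)
    qed
    finally show ?thesis unfolding I_def[symmetric] i m_def using t q i(2)
      by (simp add: ennreal_le_iff)
  qed
qed

lemma ereal_sup_SUP_le_mult:
  fixes F :: "'i \<Rightarrow> ereal" and G :: "'j \<Rightarrow> ereal"
  assumes C: "1 \<le> C" and U: "0 \<le> U"
    and bound: "\<And>t j. 0 \<le> t \<Longrightarrow> (\<And>i. i \<in> I \<Longrightarrow> F i \<le> ereal t) \<Longrightarrow> j \<in> J \<Longrightarrow> G j \<le> ereal (C * t)"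
  shows "sup (SUP j\<in>J. G j) U \<le> ereal C * sup (SUP i\<in>I. F i) U"
proof (cases "sup (SUP i\<in>I. F i) U")
  case (real t)
  have Ut: "U \<le> ereal t" using real sup_ge2[of U "SUP i\<in>I. F i"] by simp
  then have t: "0 \<le> t" using order_trans[OF U Ut] by simp
  have "F i \<le> ereal t" if "i \<in> I" for i
    using that real by (metis SUP_upper le_supI1)
  then have "G j \<le> ereal (C * t)" if "j \<in> J" for j
    using bound[OF t] that by blast
  moreover have "U \<le> ereal (C * t)"
  proof -
    have "ereal t \<le> ereal (C * t)" using C t mult_right_mono[of 1 C t] by simp
    with Ut show ?thesis by (rule order_trans)
  qed
  ultimately have "sup (SUP j\<in>J. G j) U \<le> ereal (C * t)"
    by (intro sup_least SUP_least)
  then show ?thesis unfolding real by simp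
next
  case PInf
  then show ?thesis using C by simp
next
  case MInf
  then show ?thesis using U sup_ge2[of U "SUP i\<in>I. F i"] by simp
qed

lemma morrey_term_nonneg: "0 \<le> morrey_term M p q f B Q"
  unfolding morrey_term_def enn_pow_def by (auto intro!: ereal_0_le_mult)

lemma morrey_norm_nonneg: "0 \<le> morrey_norm M p q f"
  unfolding morrey_norm_def by (rule order_trans[OF _ sup_ge2]) (auto simp: morrey_term_nonneg)

lemma morrey_norm_d_nonneg: "0 \<le> morrey_norm_d M k \<beta> p q f"
  unfolding morrey_norm_d_def by (rule order_trans[OF _ sup_ge2]) (auto simp: morrey_term_nonneg)

lemma power_lt_powr_of_exponent_bound:
  fixes k \<beta> p q :: real
  assumes q: "1 \<le> q" "q < p" and k: "1 < k" and \<beta>: "k powr (real n * p * q / (p - q)) < \<beta>"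
  shows "k ^ n < \<beta> powr (1 - q/p)"
proof -
  have "k ^ n = k powr real n" using k by (simp add: powr_realpow)
  also have "\<dots> \<le> k powr (real n * q)"
    using k q mult_left_mono[of 1 q "real n"] by (intro powr_mono) auto
  also have "real n * q = real n * p * q / (p - q) * (1 - q/p)"
    using q by (simp add: field_simps)
  also have "k powr \<dots> = (k powr (real n * p * q / (p - q))) powr (1 - q/p)"
    by (simp add: powr_powr)
  also have "\<dots> < \<beta> powr (1 - q/p)" using \<beta> q by (intro powr_less_mono2) auto
  finally show ?thesis .
qed

context radon
begin

lemma morrey_norm_d_le_morrey_norm:
  assumes q: "0 < q" "q < p" and k: "1 < k" and \<beta>: "1 < \<beta>"
  shows "\<exists>C>0. \<forall>f \<in> borel_measurable M. morrey_norm_d M k \<beta> p q f \<le> ereal C * morrey_norm M p q f"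
proof -
  define a where "a = 1 - q/p"
  define X where "X = (4 / (k - 1) + 2) ^ DIM('a) * \<beta> powr a"
  define C where "C = max 1 (X powr (1/q))"
  have a: "0 < a" unfolding a_def using q by simp
  have X: "0 \<le> X" unfolding X_def using k by simp
  have C: "1 \<le> C" "X powr (1/q) \<le> C" unfolding C_def by auto
  have "morrey_norm_d M k \<beta> p q f \<le> ereal C * morrey_norm M p q f" if f: "f \<in> borel_measurable M" for f
    unfolding morrey_norm_d_def morrey_norm_def
  proof (rule ereal_sup_SUP_le_mult[OF C(1)])
    define \<nu> where "\<nu> = density M (\<lambda>y. ennreal (\<bar>f y\<bar> powr q))"
    have sets_\<nu>: "sets \<nu> = sets M" and ac: "absolutely_continuous M \<nu>"
      unfolding \<nu>_def using f by (auto intro: absolutely_continuousI_density)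
    fix t :: real and j assume t: "0 \<le> t" and j: "j \<in> doubling_cubes M k \<beta>"
      and bound: "\<And>i. i \<in> pos_cubes M \<Longrightarrow> (\<lambda>(y, s). morrey_term M p q f (cube y (2 * s)) (cube y s)) i \<le> ereal t"
    obtain x l where xl: "j = (x, l)" by force
    have "emeasure \<nu> (cube y s) \<le> ennreal (t powr q * measure M (cube y (2 * s)) powr a)"
      if "(y, s) \<in> pos_cubes M" for y s
      using bound[OF that] morrey_term_le_iff[OF q measure_pos_cube_pos[OF that] t f cube_sets] that
      unfolding \<nu>_def a_def pos_cubes_def by auto
    from doubling_cube_growth[OF sets_\<nu> ac k \<beta> a powr_ge_zero this] j
    have "emeasure \<nu> (cube x l) \<le> ennreal (X * t powr q * measure M (cube x l) powr a)"
      unfolding xl X_def by (simp add: mult.assoc mult.left_commute)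
    also have "\<dots> \<le> ennreal ((C * t) powr q * measure M (cube x l) powr a)"
      using mult_powr_le_powr_if_root_le[OF X t q(1) C(2)] by (intro ennreal_leI mult_right_mono) auto
    finally show "(\<lambda>(x, l). morrey_term M p q f (cube x l) (cube x l)) j \<le> ereal (C * t)"
      using morrey_term_le_iff[OF q _ _ f cube_sets] measure_pos_cube_pos[of x l l] j C(1) t
      unfolding xl \<nu>_def a_def doubling_cubes_def by auto
  qed (simp add: morrey_term_nonneg)
  then show ?thesis using C(1) by (intro exI[of _ C]) auto
qed

lemma morrey_norm_le_morrey_norm_d:
  assumes q: "0 < q" "q < p" and k: "1 < k" and \<beta>: "1 < \<beta>"
    and k\<beta>: "k ^ DIM('a) < \<beta> powr (1 - q/p)"
  shows "\<exists>C>0. \<forall>f \<in> borel_measurable M. morrey_norm M p q f \<le> ereal C * morrey_norm_d M k \<beta> p q f"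
proof -
  define a where "a = 1 - q/p"
  define X where "X = 4 ^ DIM('a) * \<beta> powr a / (1 - k ^ DIM('a) / \<beta> powr a)"
  define C where "C = max 1 (X powr (1/q))"
  have a: "0 < a" "a \<le> 1" unfolding a_def using q by auto
  have X: "0 \<le> X" unfolding X_def using k\<beta> \<beta> by (simp add: a_def divide_less_eq)
  have C: "1 \<le> C" "X powr (1/q) \<le> C" unfolding C_def by auto
  have "morrey_norm M p q f \<le> ereal C * morrey_norm_d M k \<beta> p q f" if f: "f \<in> borel_measurable M" for f
    unfolding morrey_norm_d_def morrey_norm_def
  proof (rule ereal_sup_SUP_le_mult[OF C(1)])
    define \<nu> where "\<nu> = density M (\<lambda>y. ennreal (\<bar>f y\<bar> powr q))"
    have sets_\<nu>: "sets \<nu> = sets M" and ac: "absolutely_continuous M \<nu>"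
      unfolding \<nu>_def using f by (auto intro: absolutely_continuousI_density)
    fix t :: real and j assume t: "0 \<le> t" and j: "j \<in> pos_cubes M"
      and bound: "\<And>i. i \<in> doubling_cubes M k \<beta> \<Longrightarrow> (\<lambda>(y, s). morrey_term M p q f (cube y s) (cube y s)) i \<le> ereal t"
    obtain x l where xl: "j = (x, l)" by force
    have "emeasure \<nu> (cube y s) \<le> ennreal (t powr q * measure M (cube y s) powr a)"
      if "(y, s) \<in> doubling_cubes M k \<beta>" for y s
      using that bound[OF that] morrey_term_le_iff[OF q _ t f cube_sets] measure_pos_cube_pos[of y s s]
      unfolding \<nu>_def a_def doubling_cubes_def by auto
    from cube_growth_from_doubling_cubes[OF sets_\<nu> ac k \<beta> a _ powr_ge_zero this] j k\<beta>
    have "emeasure \<nu> (cube x l) \<le> ennreal (X * t powr q * measure M (cube x (2 * l)) powr a)"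
      unfolding xl X_def a_def pos_cubes_def by (simp add: mult.assoc)
    also have "\<dots> \<le> ennreal ((C * t) powr q * measure M (cube x (2 * l)) powr a)"
      using mult_powr_le_powr_if_root_le[OF X t q(1) C(2)] by (intro ennreal_leI mult_right_mono) auto
    finally show "(\<lambda>(x, l). morrey_term M p q f (cube x (2 * l)) (cube x l)) j \<le> ereal (C * t)"
      using morrey_term_le_iff[OF q measure_pos_cube_pos[of x l "2 * l"] _ f cube_sets] j C(1) t
      unfolding xl \<nu>_def a_def pos_cubes_def by auto
  qed (simp add: morrey_term_nonneg)
  then show ?thesis using C(1) by (intro exI[of _ C]) auto
qed

end

theorem theorem1:
  fixes M :: "'a::euclidean_space measure" and p q k \<beta> :: real
  assumes "radon_measure M"
    and "1 \<le> q" and "q < p"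
    and "k > 1" and "\<beta> > 1"
    and "\<beta> > k powr (real DIM('a) * p * q / (p - q))"
  shows "\<exists>C>0. \<forall>f \<in> morrey_space M p q.
           morrey_norm_d M k \<beta> p q f \<le> ereal C * morrey_norm M p q f \<and>
           morrey_norm M p q f \<le> ereal C * morrey_norm_d M k \<beta> p q f"
proof -
  interpret radon M using assms(1) by unfold_locales
  have q: "0 < q" "q < p" using assms(2,3) by auto
  obtain C1 where C1: "0 < C1"
      "\<forall>f \<in> borel_measurable M. morrey_norm_d M k \<beta> p q f \<le> ereal C1 * morrey_norm M p q f"
    using morrey_norm_d_le_morrey_norm[OF q assms(4,5)] by blast
  obtain C2 where C2: "0 < C2"
      "\<forall>f \<in> borel_measurable M. morrey_norm M p q f \<le> ereal C2 * morrey_norm_d M k \<beta> p q f"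
    using morrey_norm_le_morrey_norm_d[OF q assms(4,5) power_lt_powr_of_exponent_bound[OF assms(2,3,4,6)]]
    by blast
  have scale: "ereal c * X \<le> ereal (max C1 C2) * X" if "c \<le> max C1 C2" "0 \<le> X" for c X
    using that by (intro ereal_mult_right_mono) (auto simp: max_def)
  show ?thesis
  proof (intro exI[of _ "max C1 C2"] conjI ballI)
    fix f assume "f \<in> morrey_space M p q"
    then have f: "f \<in> borel_measurable M" unfolding morrey_space_def L1_loc_def by auto
    show "morrey_norm_d M k \<beta> p q f \<le> ereal (max C1 C2) * morrey_norm M p q f"
      using C1(2) f scale[OF _ morrey_norm_nonneg] by (meson max.cobounded1 order_trans)
    show "morrey_norm M p q f \<le> ereal (max C1 C2) * morrey_norm_d M k \<beta> p q f"
      using C2(2) f scale[OF _ morrey_norm_d_nonneg] by (meson max.cobounded2 order_trans)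
  qed (use C1 in simp)
qed

end
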